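(* Let $\nu\ge0$, $\epsilon\in\{0,1\}$, $\zeta$ real with $K:=1+\zeta\nu^2\neq0$, $s:=\zeta+\sqrt\nu$, and write $E=\exp(3\delta/(2K))$. Consider the system for functions $U,m,\gamma,\delta,\beta$ of $(X,T)$: $$m=\nu^2U_{XX}-\epsilon U,\qquad m_T=-m_XU-2mU_X+\tfrac23(1-\nu^{5/2})U_{XXX},$$ $$\gamma_X=-\frac{3}{4K}\gamma^2+m+\tfrac13\epsilon s,\qquad \gamma_T=\Big[\tfrac23K U_X-\tfrac23 s\gamma-\gamma U\Big]_X,$$ $$\delta_X=\gamma,\qquad \delta_T=\tfrac23KU_X-\tfrac23s\gamma-U\gamma,$$ $$\beta_X=\big[\nu^2m+\tfrac13\epsilon(\nu^{5/2}-1)\big]E,$$ $$\beta_T=\Big[-\tfrac13(\nu^{5/2}-1)(2m+\epsilon U)-\tfrac12\gamma^2+\tfrac29\epsilon(2\zeta+\zeta^2\nu^2-\nu^3+2\sqrt\nu)-\nu^2Um\Big]E,$$ whose equations are mutually compatible. Define $$Q_U=\gamma E,\quad Q_m=\Big[\nu^2m_X+\frac{3\nu^2\gamma}{K}m+\gamma\epsilon\frac{\nu^{5/2}-1}{K}\Big]E,\quad Q_\gamma=\big[\nu^2m+\tfrac13\epsilon(\nu^{5/2}-1)\big]E,$$ $$Q_\delta=\beta,\qquad Q_\beta=\nu^2\big[\nu^2m+\tfrac13\epsilon(\nu^{5/2}-1)\big]E^2+\frac{3}{4K}\beta^2 .$$ Then the evolutionary vector field $W=Q_U\partial_U+Q_m\partial_m+Q_\gamma\partial_\gamma+Q_\delta\partial_\delta+Q_\beta\partial_\beta$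 is a symmetry of the system: for every smooth solution $(U,m,\gamma,\delta,\beta)$, the deformed tuple $(U+\tau Q_U,\,m+\tau Q_m,\,\gamma+\tau Q_\gamma,\,\delta+\tau Q_\delta,\,\beta+\tau Q_\beta)$ (with the $Q$'s evaluated on the solution) satisfies all equations of the system up to terms of order $\tau^2$. *)

theory Defs
  imports "HOL-Analysis.Analysis" "HOL-Library.Landau_Symbols"
begin

definition dX :: "(real \<Rightarrow> real \<Rightarrow> real) \<Rightarrow> real \<Rightarrow> real \<Rightarrow> real" where
  "dX f = (\<lambda>x t. deriv (\<lambda>y. f y t) x)"

definition dT :: "(real \<Rightarrow> real \<Rightarrow> real) \<Rightarrow> real \<Rightarrow> real \<Rightarrow> real" where
  "dT f = (\<lambda>x t. deriv (\<lambda>y. f x y) t)"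

text \<open>Smoothness (C-infinity on the plane): all iterated partial derivatives exist
  everywhere and are continuous.\<close>

coinductive smooth2 :: "(real \<Rightarrow> real \<Rightarrow> real) \<Rightarrow> bool" where
  "continuous_on UNIV (\<lambda>p. f (fst p) (snd p)) \<Longrightarrow>
   (\<forall>x t. (\<lambda>y. f y t) differentiable (at x)) \<Longrightarrow>
   (\<forall>x t. (\<lambda>y. f x y) differentiable (at t)) \<Longrightarrow>
   smooth2 (dX f) \<Longrightarrow> smooth2 (dT f) \<Longrightarrow> smooth2 f"

definition residuals ::
  "real \<Rightarrow> real \<Rightarrow> real \<Rightarrow> (real \<Rightarrow> real \<Rightarrow> real) \<Rightarrow> (real \<Rightarrow> real \<Rightarrow> real) \<Rightarrow>
   (real \<Rightarrow> real \<Rightarrow> real) \<Rightarrow> (real \<Rightarrow> real \<Rightarrow> real) \<Rightarrow> (real \<Rightarrow> real \<Rightarrow> real) \<Rightarrow>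
   real \<Rightarrow> real \<Rightarrow> real list" where
  "residuals \<nu> \<epsilon> \<zeta> U m g d b X T =
    (let K = 1 + \<zeta> * \<nu>^2; s = \<zeta> + sqrt \<nu>; c = \<nu> powr (5/2);
         E = exp (3 * d X T / (2 * K)) in
    [ m X T - (\<nu>^2 * dX (dX U) X T - \<epsilon> * U X T),
      dT m X T - (- dX m X T * U X T - 2 * m X T * dX U X T
                   + 2/3 * (1 - c) * dX (dX (dX U)) X T),
      dX g X T - (- 3 / (4 * K) * (g X T)^2 + m X T + 1/3 * \<epsilon> * s),
      dT g X T - dX (\<lambda>x t. 2/3 * K * dX U x t - 2/3 * s * g x t - g x t * U x t) X T,
      dX d X T - g X T,
      dT d X T - (2/3 * K * dX U X T - 2/3 * s * g X T - U X T * g X T),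
      dX b X T - (\<nu>^2 * m X T + 1/3 * \<epsilon> * (c - 1)) * E,
      dT b X T - (- 1/3 * (c - 1) * (2 * m X T + \<epsilon> * U X T) - 1/2 * (g X T)^2
                   + 2/9 * \<epsilon> * (2 * \<zeta> + \<zeta>^2 * \<nu>^2 - \<nu>^3 + 2 * sqrt \<nu>)
                   - \<nu>^2 * U X T * m X T) * E ])"

definition is_solution ::
  "real \<Rightarrow> real \<Rightarrow> real \<Rightarrow> (real \<Rightarrow> real \<Rightarrow> real) \<Rightarrow> (real \<Rightarrow> real \<Rightarrow> real) \<Rightarrow>
   (real \<Rightarrow> real \<Rightarrow> real) \<Rightarrow> (real \<Rightarrow> real \<Rightarrow> real) \<Rightarrow> (real \<Rightarrow> real \<Rightarrow> real) \<Rightarrow> bool" where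
  "is_solution \<nu> \<epsilon> \<zeta> U m g d b \<longleftrightarrow>
     (\<forall>X T. \<forall>r \<in> set (residuals \<nu> \<epsilon> \<zeta> U m g d b X T). r = 0)"

definition QU :: "real \<Rightarrow> real \<Rightarrow> real \<Rightarrow> (real \<Rightarrow> real \<Rightarrow> real) \<Rightarrow> (real \<Rightarrow> real \<Rightarrow> real) \<Rightarrow>
   (real \<Rightarrow> real \<Rightarrow> real) \<Rightarrow> (real \<Rightarrow> real \<Rightarrow> real) \<Rightarrow> (real \<Rightarrow> real \<Rightarrow> real) \<Rightarrow> real \<Rightarrow> real \<Rightarrow> real" where
  "QU \<nu> \<epsilon> \<zeta> U m g d b = (\<lambda>X T. g X T * exp (3 * d X T / (2 * (1 + \<zeta> * \<nu>^2))))"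

definition Qm :: "real \<Rightarrow> real \<Rightarrow> real \<Rightarrow> (real \<Rightarrow> real \<Rightarrow> real) \<Rightarrow> (real \<Rightarrow> real \<Rightarrow> real) \<Rightarrow>
   (real \<Rightarrow> real \<Rightarrow> real) \<Rightarrow> (real \<Rightarrow> real \<Rightarrow> real) \<Rightarrow> (real \<Rightarrow> real \<Rightarrow> real) \<Rightarrow> real \<Rightarrow> real \<Rightarrow> real" where
  "Qm \<nu> \<epsilon> \<zeta> U m g d b = (\<lambda>X T. let K = 1 + \<zeta> * \<nu>^2 in
     (\<nu>^2 * dX m X T + 3 * \<nu>^2 * g X T / K * m X T + g X T * \<epsilon> * (\<nu> powr (5/2) - 1) / K)
     * exp (3 * d X T / (2 * K)))"

definition Qg :: "real \<Rightarrow> real \<Rightarrow> real \<Rightarrow> (real \<Rightarrow> real \<Rightarrow> real) \<Rightarrow> (real \<Rightarrow> real \<Rightarrow> real) \<Rightarrow>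
   (real \<Rightarrow> real \<Rightarrow> real) \<Rightarrow> (real \<Rightarrow> real \<Rightarrow> real) \<Rightarrow> (real \<Rightarrow> real \<Rightarrow> real) \<Rightarrow> real \<Rightarrow> real \<Rightarrow> real" where
  "Qg \<nu> \<epsilon> \<zeta> U m g d b = (\<lambda>X T.
     (\<nu>^2 * m X T + 1/3 * \<epsilon> * (\<nu> powr (5/2) - 1)) * exp (3 * d X T / (2 * (1 + \<zeta> * \<nu>^2))))"

definition Qd :: "real \<Rightarrow> real \<Rightarrow> real \<Rightarrow> (real \<Rightarrow> real \<Rightarrow> real) \<Rightarrow> (real \<Rightarrow> real \<Rightarrow> real) \<Rightarrow>
   (real \<Rightarrow> real \<Rightarrow> real) \<Rightarrow> (real \<Rightarrow> real \<Rightarrow> real) \<Rightarrow> (real \<Rightarrow> real \<Rightarrow> real) \<Rightarrow> real \<Rightarrow> real \<Rightarrow> real" where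
  "Qd \<nu> \<epsilon> \<zeta> U m g d b = b"

definition Qb :: "real \<Rightarrow> real \<Rightarrow> real \<Rightarrow> (real \<Rightarrow> real \<Rightarrow> real) \<Rightarrow> (real \<Rightarrow> real \<Rightarrow> real) \<Rightarrow>
   (real \<Rightarrow> real \<Rightarrow> real) \<Rightarrow> (real \<Rightarrow> real \<Rightarrow> real) \<Rightarrow> (real \<Rightarrow> real \<Rightarrow> real) \<Rightarrow> real \<Rightarrow> real \<Rightarrow> real" where
  "Qb \<nu> \<epsilon> \<zeta> U m g d b = (\<lambda>X T. let K = 1 + \<zeta> * \<nu>^2 in
     \<nu>^2 * (\<nu>^2 * m X T + 1/3 * \<epsilon> * (\<nu> powr (5/2) - 1)) * (exp (3 * d X T / (2 * K)))^2
     + 3 / (4 * K) * (b X T)^2)"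

end

theory Submission
  imports Defs
begin

text \<open>Fix a point (X, T) and an equation of the system, and let r(\<tau>) be its residual on the
  deformed tuple. Since the partial derivatives are linear on smooth functions, r is built from
  \<tau> by sums, products and one exponential, so r(\<tau>) = r(0) + r'(0) \<tau> + O(\<tau>^2). Here r(0) is
  the residual of the solution itself, hence 0, and r'(0) is the linearization of the system in
  the direction of the characteristics Q. Its vanishing on solutions is the symmetry condition
  proper: substituting the equations of the system reduces it to a polynomial identity in
  sqrt \<nu>, \<zeta>, \<epsilon>, 1/K, exp(3 \<delta> / (2 K)), \<gamma>, \<beta> and the X-derivatives of U.\<close>

section \<open>Partial derivatives of smooth functions\<close>

definition differentiable_X :: "(real \<Rightarrow> real \<Rightarrow> real) \<Rightarrow> bool" where
  "differentiable_X f \<longleftrightarrow> (\<forall>x t. (\<lambda>y. f y t) field_differentiable at x)"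

definition differentiable_T :: "(real \<Rightarrow> real \<Rightarrow> real) \<Rightarrow> bool" where
  "differentiable_T f \<longleftrightarrow> (\<forall>x t. f x field_differentiable at t)"

lemma field_differentiable_exp_compose:
  "(f::real \<Rightarrow> real) field_differentiable at x \<Longrightarrow> (\<lambda>y. exp (f y)) field_differentiable at x"
  unfolding field_differentiable_def using DERIV_exp[THEN DERIV_chain2] by blast

lemma deriv_exp_compose:
  "(f::real \<Rightarrow> real) field_differentiable at x \<Longrightarrow> deriv (\<lambda>y. exp (f y)) x = exp (f x) * deriv f x"
  by (intro DERIV_imp_deriv DERIV_exp[THEN DERIV_chain2])
     (simp add: DERIV_deriv_iff_field_differentiable)

lemma differentiable_X_const: "differentiable_X (\<lambda>x t. c)"
  and differentiable_T_const: "differentiable_T (\<lambda>x t. c)"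
  by (simp_all add: differentiable_X_def differentiable_T_def)

lemma differentiable_X_add:
    "differentiable_X f \<Longrightarrow> differentiable_X g \<Longrightarrow> differentiable_X (\<lambda>x t. f x t + g x t)"
  and differentiable_T_add:
    "differentiable_T f \<Longrightarrow> differentiable_T g \<Longrightarrow> differentiable_T (\<lambda>x t. f x t + g x t)"
  by (auto simp: differentiable_X_def differentiable_T_def intro: field_differentiable_add)

lemma differentiable_X_mult:
    "differentiable_X f \<Longrightarrow> differentiable_X g \<Longrightarrow> differentiable_X (\<lambda>x t. f x t * g x t)"
  and differentiable_T_mult:
    "differentiable_T f \<Longrightarrow> differentiable_T g \<Longrightarrow> differentiable_T (\<lambda>x t. f x t * g x t)"
  by (auto simp: differentiable_X_def differentiable_T_def intro: field_differentiable_mult)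

lemma differentiable_X_exp: "differentiable_X f \<Longrightarrow> differentiable_X (\<lambda>x t. exp (f x t))"
  and differentiable_T_exp: "differentiable_T f \<Longrightarrow> differentiable_T (\<lambda>x t. exp (f x t))"
  by (simp_all add: differentiable_X_def differentiable_T_def field_differentiable_exp_compose)

lemma dX_const [simp]: "dX (\<lambda>x t. c) = (\<lambda>x t. 0)"
  and dT_const [simp]: "dT (\<lambda>x t. c) = (\<lambda>x t. 0)"
  by (simp_all add: dX_def dT_def)

lemma dX_add_differentiable:
    "differentiable_X f \<Longrightarrow> differentiable_X g \<Longrightarrow>
     dX (\<lambda>x t. f x t + g x t) = (\<lambda>x t. dX f x t + dX g x t)"
  and dT_add_differentiable:
    "differentiable_T f \<Longrightarrow> differentiable_T g \<Longrightarrow>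
     dT (\<lambda>x t. f x t + g x t) = (\<lambda>x t. dT f x t + dT g x t)"
  by (auto simp: differentiable_X_def differentiable_T_def dX_def dT_def)

lemma dX_mult_differentiable:
    "differentiable_X f \<Longrightarrow> differentiable_X g \<Longrightarrow>
     dX (\<lambda>x t. f x t * g x t) = (\<lambda>x t. dX f x t * g x t + f x t * dX g x t)"
  and dT_mult_differentiable:
    "differentiable_T f \<Longrightarrow> differentiable_T g \<Longrightarrow>
     dT (\<lambda>x t. f x t * g x t) = (\<lambda>x t. dT f x t * g x t + f x t * dT g x t)"
  by (auto simp: differentiable_X_def differentiable_T_def dX_def dT_def add.commute)

lemma dX_exp_differentiable:
    "differentiable_X f \<Longrightarrow> dX (\<lambda>x t. exp (f x t)) = (\<lambda>x t. exp (f x t) * dX f x t)"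
  and dT_exp_differentiable:
    "differentiable_T f \<Longrightarrow> dT (\<lambda>x t. exp (f x t)) = (\<lambda>x t. exp (f x t) * dT f x t)"
  by (auto simp: differentiable_X_def differentiable_T_def dX_def dT_def deriv_exp_compose)

inductive smooth2_generated :: "(real \<Rightarrow> real \<Rightarrow> real) \<Rightarrow> bool" where
  smooth: "smooth2 f \<Longrightarrow> smooth2_generated f"
| const: "smooth2_generated (\<lambda>x t. c)"
| add: "smooth2_generated f \<Longrightarrow> smooth2_generated g \<Longrightarrow> smooth2_generated (\<lambda>x t. f x t + g x t)"
| mult: "smooth2_generated f \<Longrightarrow> smooth2_generated g \<Longrightarrow> smooth2_generated (\<lambda>x t. f x t * g x t)"
| exp: "smooth2_generated f \<Longrightarrow> smooth2_generated (\<lambda>x t. exp (f x t))"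

lemma smooth2_generated_closed:
  assumes "smooth2_generated f"
  shows "continuous_on UNIV (\<lambda>p. f (fst p) (snd p)) \<and> differentiable_X f \<and> differentiable_T f \<and>
    smooth2_generated (dX f) \<and> smooth2_generated (dT f)"
  using assms
proof (induction rule: smooth2_generated.induct)
  case (smooth f)
  then show ?case
    by (cases rule: smooth2.cases)
       (auto simp: differentiable_X_def differentiable_T_def real_differentiable_def field_differentiable_def
             intro: smooth2_generated.smooth)
next
  case (const c)
  then show ?case
    by (simp add: differentiable_X_const differentiable_T_const smooth2_generated.const)
next
  case (add f g)
  then show ?case
    by (auto simp: differentiable_X_add differentiable_T_add dX_add_differentiable dT_add_differentiable
             intro!: smooth2_generated.add continuous_intros)
next
  case (mult f g)
  then show ?case
    by (auto simp: differentiable_X_mult differentiable_T_mult dX_mult_differentiable dT_mult_differentiable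
             intro!: smooth2_generated.add smooth2_generated.mult continuous_intros)
next
  case (exp f)
  then show ?case
    by (auto simp: differentiable_X_exp differentiable_T_exp dX_exp_differentiable dT_exp_differentiable
             intro!: smooth2_generated.mult smooth2_generated.exp continuous_intros)
qed

lemma smooth2_generated_imp_smooth2: "smooth2_generated f \<Longrightarrow> smooth2 f"
proof (coinduction arbitrary: f rule: smooth2.coinduct)
  case (smooth2 f)
  then show ?case
    using smooth2_generated_closed[OF smooth2]
    by (auto simp: differentiable_X_def differentiable_T_def real_differentiable_def field_differentiable_def)
qed

lemma smooth2_imp_differentiable_X: "smooth2 f \<Longrightarrow> differentiable_X f"
  and smooth2_imp_differentiable_T: "smooth2 f \<Longrightarrow> differentiable_T f"
  using smooth2_generated_closed[OF smooth2_generated.smooth] by blast+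

lemma smooth2_dX [simp]: "smooth2 f \<Longrightarrow> smooth2 (dX f)"
  and smooth2_dT [simp]: "smooth2 f \<Longrightarrow> smooth2 (dT f)"
  by (erule smooth2.cases; simp)+

lemma smooth2_const [simp]: "smooth2 (\<lambda>x t. c)"
  by (rule smooth2_generated_imp_smooth2[OF smooth2_generated.const])

lemma smooth2_add [simp]: "smooth2 f \<Longrightarrow> smooth2 g \<Longrightarrow> smooth2 (\<lambda>x t. f x t + g x t)"
  by (rule smooth2_generated_imp_smooth2
      [OF smooth2_generated.add[OF smooth2_generated.smooth smooth2_generated.smooth]])

lemma smooth2_mult [simp]: "smooth2 f \<Longrightarrow> smooth2 g \<Longrightarrow> smooth2 (\<lambda>x t. f x t * g x t)"
  by (rule smooth2_generated_imp_smooth2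
      [OF smooth2_generated.mult[OF smooth2_generated.smooth smooth2_generated.smooth]])

lemma smooth2_exp [simp]: "smooth2 f \<Longrightarrow> smooth2 (\<lambda>x t. exp (f x t))"
  by (rule smooth2_generated_imp_smooth2[OF smooth2_generated.exp[OF smooth2_generated.smooth]])

lemma smooth2_uminus [simp]: "smooth2 f \<Longrightarrow> smooth2 (\<lambda>x t. - f x t)"
  using smooth2_mult[OF smooth2_const[of "-1"], of f] by simp

lemma smooth2_diff [simp]: "smooth2 f \<Longrightarrow> smooth2 g \<Longrightarrow> smooth2 (\<lambda>x t. f x t - g x t)"
  using smooth2_add[OF _ smooth2_uminus, of f g] by simp

lemma smooth2_divide [simp]: "smooth2 f \<Longrightarrow> smooth2 (\<lambda>x t. f x t / c)"
  using smooth2_mult[OF _ smooth2_const[of "1 / c"], of f] by simp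

lemma smooth2_power [simp]: "smooth2 f \<Longrightarrow> smooth2 (\<lambda>x t. f x t ^ n)"
  by (induction n) simp_all

lemma dX_add [simp]:
    "smooth2 f \<Longrightarrow> smooth2 g \<Longrightarrow> dX (\<lambda>x t. f x t + g x t) = (\<lambda>x t. dX f x t + dX g x t)"
  and dT_add [simp]:
    "smooth2 f \<Longrightarrow> smooth2 g \<Longrightarrow> dT (\<lambda>x t. f x t + g x t) = (\<lambda>x t. dT f x t + dT g x t)"
  by (simp_all add: dX_add_differentiable dT_add_differentiable
      smooth2_imp_differentiable_X smooth2_imp_differentiable_T)

lemma dX_mult [simp]:
    "smooth2 f \<Longrightarrow> smooth2 g \<Longrightarrow> dX (\<lambda>x t. f x t * g x t) = (\<lambda>x t. dX f x t * g x t + f x t * dX g x t)"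
  and dT_mult [simp]:
    "smooth2 f \<Longrightarrow> smooth2 g \<Longrightarrow> dT (\<lambda>x t. f x t * g x t) = (\<lambda>x t. dT f x t * g x t + f x t * dT g x t)"
  by (simp_all add: dX_mult_differentiable dT_mult_differentiable
      smooth2_imp_differentiable_X smooth2_imp_differentiable_T)

lemma dX_exp [simp]: "smooth2 f \<Longrightarrow> dX (\<lambda>x t. exp (f x t)) = (\<lambda>x t. exp (f x t) * dX f x t)"
  and dT_exp [simp]: "smooth2 f \<Longrightarrow> dT (\<lambda>x t. exp (f x t)) = (\<lambda>x t. exp (f x t) * dT f x t)"
  by (simp_all add: dX_exp_differentiable dT_exp_differentiable
      smooth2_imp_differentiable_X smooth2_imp_differentiable_T)

lemma dX_uminus [simp]: "smooth2 f \<Longrightarrow> dX (\<lambda>x t. - f x t) = (\<lambda>x t. - dX f x t)"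
  and dT_uminus [simp]: "smooth2 f \<Longrightarrow> dT (\<lambda>x t. - f x t) = (\<lambda>x t. - dT f x t)"
  using dX_mult[OF smooth2_const[of "-1"], of f] dT_mult[OF smooth2_const[of "-1"], of f] by simp_all

lemma dX_diff [simp]:
    "smooth2 f \<Longrightarrow> smooth2 g \<Longrightarrow> dX (\<lambda>x t. f x t - g x t) = (\<lambda>x t. dX f x t - dX g x t)"
  and dT_diff [simp]:
    "smooth2 f \<Longrightarrow> smooth2 g \<Longrightarrow> dT (\<lambda>x t. f x t - g x t) = (\<lambda>x t. dT f x t - dT g x t)"
  using dX_add[OF _ smooth2_uminus, of f g] dT_add[OF _ smooth2_uminus, of f g] by simp_all

lemma dX_divide [simp]: "smooth2 f \<Longrightarrow> dX (\<lambda>x t. f x t / c) = (\<lambda>x t. dX f x t / c)"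
  and dT_divide [simp]: "smooth2 f \<Longrightarrow> dT (\<lambda>x t. f x t / c) = (\<lambda>x t. dT f x t / c)"
  using dX_mult[OF _ smooth2_const[of "1 / c"], of f] dT_mult[OF _ smooth2_const[of "1 / c"], of f]
  by simp_all

lemma dX_power2 [simp]: "smooth2 f \<Longrightarrow> dX (\<lambda>x t. f x t ^ 2) = (\<lambda>x t. 2 * f x t * dX f x t)"
  and dT_power2 [simp]: "smooth2 f \<Longrightarrow> dT (\<lambda>x t. f x t ^ 2) = (\<lambda>x t. 2 * f x t * dT f x t)"
  using dX_mult[of f f] dT_mult[of f f] by (simp_all add: power2_eq_square algebra_simps)

lemma smooth2_has_derivative_X:
  "smooth2 f \<Longrightarrow> ((\<lambda>y. f y t) has_field_derivative dX f x t) (at x)"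
  using smooth2_imp_differentiable_X
  by (simp add: differentiable_X_def dX_def DERIV_deriv_iff_field_differentiable)

lemma smooth2_has_derivative_T:
  "smooth2 f \<Longrightarrow> (f x has_field_derivative dT f x t) (at t)"
  using smooth2_imp_differentiable_T
  by (simp add: differentiable_T_def dT_def DERIV_deriv_iff_field_differentiable)

lemma smooth2_continuous_on: "smooth2 f \<Longrightarrow> continuous_on S (\<lambda>(x, t). f x t)"
  by (erule smooth2.cases) (auto simp: split_beta intro: continuous_on_subset)

lemma smooth2_continuous_on_T:
  assumes "smooth2 f"
  shows "continuous_on S (f x)"
proof -
  have "continuous_on S (\<lambda>t. (\<lambda>(x, t). f x t) (x, t))"
    using assms by (intro continuous_on_compose2[OF smooth2_continuous_on]) (auto intro!: continuous_intros)
  then show ?thesis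
    by simp
qed

lemma dX_increment_eq_integral:
  assumes f: "smooth2 f" and "a \<le> s"
  shows "dX f x s - dX f x a = integral {a..s} (dX (dT f) x)"
proof -
  have "(dT f y has_integral f y s - f y a) {a..s}" for y
    using \<open>a \<le> s\<close> by (rule fundamental_theorem_of_calculus)
      (simp add: has_field_derivative_at_within smooth2_has_derivative_T[OF f]
        flip: has_real_derivative_iff_has_vector_derivative)
  then have FTC: "integral {a..s} (dT f y) = f y s - f y a" for y
    by (rule integral_unique)
  have "((\<lambda>y. integral (cbox a s) (dT f y)) has_field_derivative
      integral (cbox a s) (dX (dT f) x)) (at x within UNIV)"
  proof (rule leibniz_rule_field_derivative)
    show "((\<lambda>y. dT f y t) has_field_derivative dX (dT f) y t) (at y within UNIV)" for y t
      using f by (simp add: smooth2_has_derivative_X)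
    show "dT f y integrable_on cbox a s" for y
      using f by (simp add: integrable_continuous_interval smooth2_continuous_on_T)
    show "continuous_on (UNIV \<times> cbox a s) (\<lambda>(y, t). dX (dT f) y t)"
      using f by (simp add: smooth2_continuous_on)
  qed simp_all
  then have "((\<lambda>y. f y s - f y a) has_field_derivative integral {a..s} (dX (dT f) x)) (at x)"
    by (simp add: FTC)
  moreover have "((\<lambda>y. f y s - f y a) has_field_derivative dX f x s - dX f x a) (at x)"
    by (intro derivative_intros smooth2_has_derivative_X f)
  ultimately show ?thesis
    by (rule DERIV_unique[rotated])
qed

lemma dT_dX_commute [simp]: "smooth2 f \<Longrightarrow> dT (dX f) = dX (dT f)"
proof (intro ext)
  fix x t
  assume f: "smooth2 f"
  have "((\<lambda>s. integral {t - 1..s} (dX (dT f) x)) has_field_derivative dX (dT f) x t)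
      (at t within {t - 1..t + 1})"
    using f by (intro integral_has_real_derivative smooth2_continuous_on_T) auto
  then have "((\<lambda>s. integral {t - 1..s} (dX (dT f) x)) has_field_derivative dX (dT f) x t) (at t)"
    by (simp add: at_within_interior[of t "{t - 1..t + 1}"])
  then have "((\<lambda>s. dX f x (t - 1) + integral {t - 1..s} (dX (dT f) x)) has_field_derivative
      dX (dT f) x t) (at t)"
    by (auto intro: derivative_eq_intros)
  then have "((\<lambda>s. dX f x s) has_field_derivative dX (dT f) x t) (at t)"
  proof (rule has_field_derivative_transform_within_open[of _ _ _ "{t - 1<..}"])
    fix s
    assume "s \<in> {t - 1<..}"
    then show "dX f x (t - 1) + integral {t - 1..s} (dX (dT f) x) = dX f x s"
      using dX_increment_eq_integral[OF f, of "t - 1" s x] by simp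
  qed auto
  then show "dT (dX f) x t = dX (dT f) x t"
    by (simp add: dT_def DERIV_imp_deriv)
qed

section \<open>First-order expansions at 0\<close>

definition jet1 :: "(real \<Rightarrow> real) \<Rightarrow> real \<Rightarrow> real \<Rightarrow> bool" where
  "jet1 \<phi> a b \<longleftrightarrow> (\<lambda>\<tau>. \<phi> \<tau> - (a + b * \<tau>)) \<in> O[at 0](\<lambda>\<tau>. \<tau>^2)"

lemma jet1_cong: "jet1 \<phi> a b \<Longrightarrow> a = a' \<Longrightarrow> b = b' \<Longrightarrow> jet1 \<phi> a' b'"
  by simp

lemma jet1_zero_imp_bigo: "jet1 \<phi> 0 0 \<Longrightarrow> \<phi> \<in> O[at 0](\<lambda>\<tau>. \<tau>^2)"
  by (simp add: jet1_def)

lemma power2_bigo_at_0: "(\<lambda>\<tau>::real. \<tau>^2) \<in> O[at 0](\<lambda>\<tau>. \<tau>)"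
proof (rule bigoI[where c = 1])
  have "eventually (\<lambda>\<tau>::real. \<bar>\<tau>\<bar> < 1) (at 0)"
    using eventually_at[of "\<lambda>\<tau>::real. \<bar>\<tau>\<bar> < 1" 0 UNIV] by (auto intro: exI[of _ 1])
  then show "eventually (\<lambda>\<tau>::real. norm (\<tau>^2) \<le> 1 * norm \<tau>) (at 0)"
  proof eventually_elim
    case (elim \<tau>)
    then have "\<bar>\<tau>\<bar> * \<bar>\<tau>\<bar> \<le> \<bar>\<tau>\<bar>"
      by (intro mult_left_le_one_le) auto
    then show ?case
      by (simp add: power2_eq_square abs_mult)
  qed
qed

lemma jet1_imp_bigo_linear:
  assumes "jet1 \<phi> a b"
  shows "(\<lambda>\<tau>. \<phi> \<tau> - a) \<in> O[at 0](\<lambda>\<tau>. \<tau>)"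
proof -
  have "(\<lambda>\<tau>. \<phi> \<tau> - (a + b * \<tau>)) \<in> O[at 0](\<lambda>\<tau>. \<tau>)"
    using assms power2_bigo_at_0 unfolding jet1_def by (rule landau_o.big_trans)
  from sum_in_bigo(1)[OF this, of "\<lambda>\<tau>. b * \<tau>"] show ?thesis
    by simp
qed

lemma jet1_imp_tendsto:
  assumes "jet1 \<phi> a b"
  shows "((\<lambda>\<tau>. \<phi> \<tau> - a) \<longlongrightarrow> 0) (at 0)"
proof -
  have "(\<lambda>\<tau>::real. \<tau>) \<in> o[at 0](\<lambda>_. 1)"
    by (rule smalloI_tendsto) (simp_all add: tendsto_ident_at)
  from smalloD_tendsto[OF landau_o.big_small_trans[OF jet1_imp_bigo_linear[OF assms] this]]
  show ?thesis
    by simp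
qed

lemma jet1_const: "jet1 (\<lambda>\<tau>. c) c 0"
  and jet1_ident: "jet1 (\<lambda>\<tau>. \<tau>) 0 1"
  by (simp_all add: jet1_def)

lemma jet1_add: "jet1 \<phi> a b \<Longrightarrow> jet1 \<psi> c d \<Longrightarrow> jet1 (\<lambda>\<tau>. \<phi> \<tau> + \<psi> \<tau>) (a + c) (b + d)"
  unfolding jet1_def by (drule (1) sum_in_bigo(1)) (simp add: algebra_simps)

lemma jet1_mult:
  assumes \<phi>: "jet1 \<phi> a b" and \<psi>: "jet1 \<psi> c d"
  shows "jet1 (\<lambda>\<tau>. \<phi> \<tau> * \<psi> \<tau>) (a * c) (a * d + b * c)"
proof -
  have "(\<lambda>\<tau>. \<phi> \<tau> * \<psi> \<tau> - (a * c + (a * d + b * c) * \<tau>)) =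
      (\<lambda>\<tau>. (a * (\<psi> \<tau> - (c + d * \<tau>)) + c * (\<phi> \<tau> - (a + b * \<tau>))) + (\<phi> \<tau> - a) * (\<psi> \<tau> - c))"
    by (simp add: fun_eq_iff algebra_simps)
  moreover have "(\<lambda>\<tau>. (\<phi> \<tau> - a) * (\<psi> \<tau> - c)) \<in> O[at 0](\<lambda>\<tau>. \<tau>^2)"
    using landau_o.big.mult[OF jet1_imp_bigo_linear[OF \<phi>] jet1_imp_bigo_linear[OF \<psi>]]
    by (simp add: power2_eq_square)
  ultimately show ?thesis
    using \<phi> \<psi> unfolding jet1_def by (simp add: sum_in_bigo)
qed

lemma exp_minus_one_minus_bigo: "(\<lambda>x::real. exp x - 1 - x) \<in> O[nhds 0](\<lambda>x. x^2)"
proof (rule bigoI[where c = "exp 1"])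
  have "eventually (\<lambda>x::real. \<bar>x\<bar> < 1) (nhds 0)"
    using eventually_nhds_metric[of "\<lambda>x::real. \<bar>x\<bar> < 1" 0] by (auto simp: dist_real_def intro: exI[of _ 1])
  then show "eventually (\<lambda>x::real. norm (exp x - 1 - x) \<le> exp 1 * norm (x^2)) (nhds 0)"
  proof eventually_elim
    case (elim x)
    obtain t where "\<bar>t\<bar> \<le> \<bar>x\<bar>" and "exp x = (\<Sum>m<2. x ^ m / fact m) + exp t / fact 2 * x^2"
      using Maclaurin_exp_le by blast
    then have "norm (exp x - 1 - x) = exp t / 2 * x^2"
      by (simp add: numeral_2_eq_2)
    also have "\<dots> \<le> exp 1 * x^2"
    proof (rule mult_right_mono)
      have "exp t \<le> exp 1"
        using \<open>\<bar>t\<bar> \<le> \<bar>x\<bar>\<close> elim by simp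
      then show "exp t / 2 \<le> exp 1"
        using exp_gt_zero[of 1] by linarith
    qed simp
    finally show ?case
      by simp
  qed
qed

lemma jet1_exp:
  assumes \<phi>: "jet1 \<phi> a b"
  shows "jet1 (\<lambda>\<tau>. exp (\<phi> \<tau>)) (exp a) (exp a * b)"
proof -
  let ?p = "\<lambda>\<tau>. \<phi> \<tau> - a"
  have "(\<lambda>\<tau>. exp (?p \<tau>) - 1 - ?p \<tau>) \<in> O[at 0](\<lambda>\<tau>. (?p \<tau>)^2)"
    using landau_o.big.compose[OF exp_minus_one_minus_bigo jet1_imp_tendsto[OF \<phi>]] .
  also have "(\<lambda>\<tau>. (?p \<tau>)^2) \<in> O[at 0](\<lambda>\<tau>. \<tau>^2)"
    using landau_o.big.mult[OF jet1_imp_bigo_linear[OF \<phi>] jet1_imp_bigo_linear[OF \<phi>]]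
    by (simp add: power2_eq_square)
  finally have "(\<lambda>\<tau>. (exp (?p \<tau>) - 1 - ?p \<tau>) + (\<phi> \<tau> - (a + b * \<tau>))) \<in> O[at 0](\<lambda>\<tau>. \<tau>^2)"
    using \<phi> unfolding jet1_def by (rule sum_in_bigo)
  then have "(\<lambda>\<tau>. exp a * ((exp (?p \<tau>) - 1 - ?p \<tau>) + (\<phi> \<tau> - (a + b * \<tau>)))) \<in> O[at 0](\<lambda>\<tau>. \<tau>^2)"
    by simp
  then show ?thesis
    unfolding jet1_def by (simp add: algebra_simps flip: exp_add)
qed

lemma jet1_uminus: "jet1 \<phi> a b \<Longrightarrow> jet1 (\<lambda>\<tau>. - \<phi> \<tau>) (- a) (- b)"
  using jet1_mult[OF jet1_const[of "-1"]] by simp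

lemma jet1_diff: "jet1 \<phi> a b \<Longrightarrow> jet1 \<psi> c d \<Longrightarrow> jet1 (\<lambda>\<tau>. \<phi> \<tau> - \<psi> \<tau>) (a - c) (b - d)"
  using jet1_add[OF _ jet1_uminus] by simp

lemma jet1_divide: "jet1 \<phi> a b \<Longrightarrow> jet1 (\<lambda>\<tau>. \<phi> \<tau> / k) (a / k) (b / k)"
  using jet1_mult[OF _ jet1_const[of "1 / k"]] by simp

lemma jet1_power2: "jet1 \<phi> a b \<Longrightarrow> jet1 (\<lambda>\<tau>. \<phi> \<tau> ^ 2) (a ^ 2) (2 * a * b)"
  using jet1_mult[of \<phi> a b \<phi> a b] by (simp add: power2_eq_square algebra_simps)

lemmas jet1_intros = jet1_const jet1_ident jet1_add jet1_diff jet1_mult jet1_uminus jet1_divide jet1_power2 jet1_exp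

section \<open>Linearization of the system\<close>

definition linearized_residuals ::
  "real \<Rightarrow> real \<Rightarrow> real \<Rightarrow> (real \<Rightarrow> real \<Rightarrow> real) \<Rightarrow> (real \<Rightarrow> real \<Rightarrow> real) \<Rightarrow>
   (real \<Rightarrow> real \<Rightarrow> real) \<Rightarrow> (real \<Rightarrow> real \<Rightarrow> real) \<Rightarrow> (real \<Rightarrow> real \<Rightarrow> real) \<Rightarrow>
   (real \<Rightarrow> real \<Rightarrow> real) \<Rightarrow> (real \<Rightarrow> real \<Rightarrow> real) \<Rightarrow>
   (real \<Rightarrow> real \<Rightarrow> real) \<Rightarrow> (real \<Rightarrow> real \<Rightarrow> real) \<Rightarrow> (real \<Rightarrow> real \<Rightarrow> real) \<Rightarrow>
   real \<Rightarrow> real \<Rightarrow> real list" where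
  "linearized_residuals \<nu> \<epsilon> \<zeta> U m g d b U' m' g' d' b' X T =
    (let K = 1 + \<zeta> * \<nu>^2; s = \<zeta> + sqrt \<nu>; c = \<nu> powr (5/2);
         E = exp (3 * d X T / (2 * K)); E' = 3 * d' X T / (2 * K) * E in
    [ m' X T - (\<nu>^2 * dX (dX U') X T - \<epsilon> * U' X T),
      dT m' X T - (- dX m' X T * U X T - dX m X T * U' X T
                   - 2 * m' X T * dX U X T - 2 * m X T * dX U' X T
                   + 2/3 * (1 - c) * dX (dX (dX U')) X T),
      dX g' X T - (- 3 / (4 * K) * (2 * g X T * g' X T) + m' X T),
      dT g' X T - dX (\<lambda>x t. 2/3 * K * dX U' x t - 2/3 * s * g' x t
                             - g' x t * U x t - g x t * U' x t) X T,
      dX d' X T - g' X T,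
      dT d' X T - (2/3 * K * dX U' X T - 2/3 * s * g' X T - U' X T * g X T - U X T * g' X T),
      dX b' X T - (\<nu>^2 * m' X T * E + (\<nu>^2 * m X T + 1/3 * \<epsilon> * (c - 1)) * E'),
      dT b' X T - ((- 1/3 * (c - 1) * (2 * m' X T + \<epsilon> * U' X T) - g X T * g' X T
                     - \<nu>^2 * (U' X T * m X T + U X T * m' X T)) * E
                   + (- 1/3 * (c - 1) * (2 * m X T + \<epsilon> * U X T) - 1/2 * (g X T)^2
                      + 2/9 * \<epsilon> * (2 * \<zeta> + \<zeta>^2 * \<nu>^2 - \<nu>^3 + 2 * sqrt \<nu>)
                      - \<nu>^2 * U X T * m X T) * E') ])"

lemma length_linearized_residuals [simp]:
  "length (linearized_residuals \<nu> \<epsilon> \<zeta> U m g d b U' m' g' d' b' X T) = 8"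
  by (simp add: linearized_residuals_def Let_def)

lemma jet1_residuals:
  assumes "smooth2 U" "smooth2 m" "smooth2 g" "smooth2 d" "smooth2 b"
    and "smooth2 U'" "smooth2 m'" "smooth2 g'" "smooth2 d'" "smooth2 b'"
    and "i < 8"
  shows "jet1 (\<lambda>\<tau>. residuals \<nu> \<epsilon> \<zeta>
      (\<lambda>x t. U x t + \<tau> * U' x t) (\<lambda>x t. m x t + \<tau> * m' x t) (\<lambda>x t. g x t + \<tau> * g' x t)
      (\<lambda>x t. d x t + \<tau> * d' x t) (\<lambda>x t. b x t + \<tau> * b' x t) X T ! i)
    (residuals \<nu> \<epsilon> \<zeta> U m g d b X T ! i)
    (linearized_residuals \<nu> \<epsilon> \<zeta> U m g d b U' m' g' d' b' X T ! i)"
proof -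
  (* With K opaque, simp cannot distribute it inside denominators, so the coefficient
     identities stay ring identities in the atoms 1 / (c * K). *)
  obtain K where K: "1 + \<zeta> * \<nu>^2 = K"
    by simp
  have "i = 0 \<or> i = 1 \<or> i = 2 \<or> i = 3 \<or> i = 4 \<or> i = 5 \<or> i = 6 \<or> i = 7"
    using \<open>i < 8\<close> by linarith
  then show ?thesis
    by - (elim disjE; (hypsubst, rule jet1_cong,
        simp add: assms K residuals_def linearized_residuals_def Let_def, (rule jet1_intros)+,
        (simp add: assms K residuals_def linearized_residuals_def Let_def;
         simp add: algebra_simps power2_eq_square)+))
qed

section \<open>The symmetry condition\<close>

locale system_solution =
  fixes \<nu> \<epsilon> \<zeta> :: real and U m g d b :: "real \<Rightarrow> real \<Rightarrow> real"
  assumes nu_nonneg: "\<nu> \<ge> 0" and K_nonzero: "1 + \<zeta> * \<nu>^2 \<noteq> 0"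
    and smooth [simp]: "smooth2 U" "smooth2 m" "smooth2 g" "smooth2 d" "smooth2 b"
    and solves: "is_solution \<nu> \<epsilon> \<zeta> U m g d b"
begin

lemma residuals_eq_0: "i < 8 \<Longrightarrow> residuals \<nu> \<epsilon> \<zeta> U m g d b X T ! i = 0"
  using solves nth_mem[of i "residuals \<nu> \<epsilon> \<zeta> U m g d b X T"]
  by (auto simp: is_solution_def residuals_def Let_def)

lemma m_eq: "m x t = \<nu>^2 * dX (dX U) x t - \<epsilon> * U x t"
  and dT_m_eq: "dT m = (\<lambda>x t. - dX m x t * U x t - 2 * m x t * dX U x t
      + 2/3 * (1 - \<nu> powr (5/2)) * dX (dX (dX U)) x t)"
  and dX_g_eq: "dX g = (\<lambda>x t. - 3 / (4 * (1 + \<zeta> * \<nu>^2)) * (g x t)^2 + m x t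
      + 1/3 * \<epsilon> * (\<zeta> + sqrt \<nu>))"
  and dT_g_eq: "dT g = dX (\<lambda>x t. 2/3 * (1 + \<zeta> * \<nu>^2) * dX U x t - 2/3 * (\<zeta> + sqrt \<nu>) * g x t
      - g x t * U x t)"
  and dX_d_eq: "dX d = g"
  and dT_d_eq: "dT d = (\<lambda>x t. 2/3 * (1 + \<zeta> * \<nu>^2) * dX U x t - 2/3 * (\<zeta> + sqrt \<nu>) * g x t
      - U x t * g x t)"
  and dX_b_eq: "dX b = (\<lambda>x t. (\<nu>^2 * m x t + 1/3 * \<epsilon> * (\<nu> powr (5/2) - 1))
      * exp (3 * d x t / (2 * (1 + \<zeta> * \<nu>^2))))"
  and dT_b_eq: "dT b = (\<lambda>x t. (- 1/3 * (\<nu> powr (5/2) - 1) * (2 * m x t + \<epsilon> * U x t) - 1/2 * (g x t)^2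
      + 2/9 * \<epsilon> * (2 * \<zeta> + \<zeta>^2 * \<nu>^2 - \<nu>^3 + 2 * sqrt \<nu>) - \<nu>^2 * U x t * m x t)
      * exp (3 * d x t / (2 * (1 + \<zeta> * \<nu>^2))))"
  using solves by (simp_all add: is_solution_def residuals_def Let_def fun_eq_iff)

lemmas evolution_eqs = dT_m_eq dX_g_eq dT_g_eq dX_d_eq dT_d_eq dX_b_eq dT_b_eq

lemma dX_m_eq: "dX m = (\<lambda>x t. \<nu>^2 * dX (dX (dX U)) x t - \<epsilon> * dX U x t)"
  and dX_dX_m_eq: "dX (dX m) = (\<lambda>x t. \<nu>^2 * dX (dX (dX (dX U))) x t - \<epsilon> * dX (dX U) x t)"
proof -
  have m: "m = (\<lambda>x t. \<nu>^2 * dX (dX U) x t - \<epsilon> * U x t)"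
    by (intro ext) (rule m_eq)
  show "dX m = (\<lambda>x t. \<nu>^2 * dX (dX (dX U)) x t - \<epsilon> * dX U x t)"
    and "dX (dX m) = (\<lambda>x t. \<nu>^2 * dX (dX (dX (dX U))) x t - \<epsilon> * dX (dX U) x t)"
    by (subst m; simp)+
qed

lemma powr_five_halves: "\<nu> powr (5/2) = \<nu>^2 * sqrt \<nu>"
proof (cases "\<nu> = 0")
  case False
  then have "\<nu> powr (5/2) = \<nu> powr 2 * \<nu> powr (1/2)"
    by (simp flip: powr_add)
  with False nu_nonneg show ?thesis
    by (simp add: powr_half_sqrt)
qed simp

lemma smooth2_characteristics:
  "smooth2 (QU \<nu> \<epsilon> \<zeta> U m g d b)" "smooth2 (Qm \<nu> \<epsilon> \<zeta> U m g d b)" "smooth2 (Qg \<nu> \<epsilon> \<zeta> U m g d b)"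
  "smooth2 (Qd \<nu> \<epsilon> \<zeta> U m g d b)" "smooth2 (Qb \<nu> \<epsilon> \<zeta> U m g d b)"
  by (simp_all add: QU_def Qm_def Qg_def Qd_def Qb_def Let_def)

lemma linearized_residuals_characteristics:
  "list_all (\<lambda>r. r = 0) (linearized_residuals \<nu> \<epsilon> \<zeta> U m g d b (QU \<nu> \<epsilon> \<zeta> U m g d b)
    (Qm \<nu> \<epsilon> \<zeta> U m g d b) (Qg \<nu> \<epsilon> \<zeta> U m g d b) (Qd \<nu> \<epsilon> \<zeta> U m g d b)
    (Qb \<nu> \<epsilon> \<zeta> U m g d b) X T)"
proof -
  obtain K where K: "1 + \<zeta> * \<nu>^2 = K" and "K \<noteq> 0"
    using K_nonzero by simp
  obtain L where L: "inverse K = L" and KL: "K * L = 1"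
    using \<open>K \<noteq> 0\<close> by simp
  obtain E where E: "exp (3 * d X T / (2 * K)) = E"
    by simp
  obtain w where w: "sqrt \<nu> = w" and ww: "w^2 = \<nu>"
    using nu_nonneg by simp
  (* The evolution equations are substituted before m is eliminated: m_XT must become (m_T)_X,
     since the system does not determine U_T. What remains is a polynomial identity modulo
     K L = 1, K = 1 + zeta nu^2 and w^2 = nu. *)
  show ?thesis
    by (simp add: linearized_residuals_def Let_def QU_def Qm_def Qg_def Qd_def Qb_def evolution_eqs K;
      (intro conjI)?; (simp only: dX_m_eq dX_dX_m_eq m_eq powr_five_halves w E)?;
      (simp only: divide_inverse inverse_mult_distrib L)?; (simp only: inverse_eq_divide)?;
      (simp add: field_simps)?; (algebra | (insert KL K ww, algebra)))
qed

lemma deformed_residuals_bigo: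
  assumes "i < 8"
  shows "(\<lambda>\<tau>. residuals \<nu> \<epsilon> \<zeta>
      (\<lambda>x t. U x t + \<tau> * QU \<nu> \<epsilon> \<zeta> U m g d b x t)
      (\<lambda>x t. m x t + \<tau> * Qm \<nu> \<epsilon> \<zeta> U m g d b x t)
      (\<lambda>x t. g x t + \<tau> * Qg \<nu> \<epsilon> \<zeta> U m g d b x t)
      (\<lambda>x t. d x t + \<tau> * Qd \<nu> \<epsilon> \<zeta> U m g d b x t)
      (\<lambda>x t. b x t + \<tau> * Qb \<nu> \<epsilon> \<zeta> U m g d b x t) X T ! i)
    \<in> O[at 0](\<lambda>\<tau>. \<tau>^2)"
proof -
  have "linearized_residuals \<nu> \<epsilon> \<zeta> U m g d b (QU \<nu> \<epsilon> \<zeta> U m g d b) (Qm \<nu> \<epsilon> \<zeta> U m g d b)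
      (Qg \<nu> \<epsilon> \<zeta> U m g d b) (Qd \<nu> \<epsilon> \<zeta> U m g d b) (Qb \<nu> \<epsilon> \<zeta> U m g d b) X T ! i = 0"
    using linearized_residuals_characteristics assms by (simp add: list_all_length)
  moreover note jet1_residuals[OF smooth smooth2_characteristics assms, where \<nu> = \<nu> and \<epsilon> = \<epsilon>
      and \<zeta> = \<zeta> and X = X and T = T]
  ultimately show ?thesis
    using residuals_eq_0[OF assms] by (simp add: jet1_zero_imp_bigo)
qed

end

theorem theorem6:
  fixes \<nu> \<epsilon> \<zeta> :: real
    and U m g d b :: "real \<Rightarrow> real \<Rightarrow> real"
  assumes "\<nu> \<ge> 0" and "\<epsilon> \<in> {0, 1}" and "1 + \<zeta> * \<nu>^2 \<noteq> 0"
    and "smooth2 U" "smooth2 m" "smooth2 g" "smooth2 d" "smooth2 b"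
    and "is_solution \<nu> \<epsilon> \<zeta> U m g d b"
  shows "\<forall>X T. \<forall>i < 8.
    (\<lambda>\<tau>. residuals \<nu> \<epsilon> \<zeta>
        (\<lambda>x t. U x t + \<tau> * QU \<nu> \<epsilon> \<zeta> U m g d b x t)
        (\<lambda>x t. m x t + \<tau> * Qm \<nu> \<epsilon> \<zeta> U m g d b x t)
        (\<lambda>x t. g x t + \<tau> * Qg \<nu> \<epsilon> \<zeta> U m g d b x t)
        (\<lambda>x t. d x t + \<tau> * Qd \<nu> \<epsilon> \<zeta> U m g d b x t)
        (\<lambda>x t. b x t + \<tau> * Qb \<nu> \<epsilon> \<zeta> U m g d b x t) X T ! i)
    \<in> O[at (0::real)](\<lambda>\<tau>. \<tau>^2)"
proof -
  interpret system_solution \<nu> \<epsilon> \<zeta> U m g d b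
    using assms(1,3-9) by unfold_locales
  show ?thesis
    using deformed_residuals_bigo by blast
qed

end
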